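(* Let $A$ be a unital ring and $p\in A$ a full idempotent, and suppose $\sum_{i=1}^n a_ipb_i=1$ for some $a_1,\dots,a_n,b_1,\dots,b_n\in A$. Then $\operatorname{sr}(pAp)\le n\cdot\operatorname{sr}(A)-n+1$.
   Context: An idempotent $p$ in a unital ring $A$ is full if $ApA=A$. A row $(a_1,\dots,a_n)\in A^n$ is right unimodular if $\sum_{i=1}^n a_iA=A$. A row $(a_1,\dots,a_n,b)\in A^{n+1}$ is reducible if there exist $c_1,\dots,c_n\in A$ such that $(a_1+bc_1,\dots,a_n+bc_n)$ is right unimodular. The (Bass) stable rank $\operatorname{sr}(A)$ is the least positive integer $n$ such that every right unimodular row in $A^{n+1}$ is reducible, or $\infty$ if no such $n$ exists (with the convention that the inequality is trivial if $\operatorname{sr}(A)=\infty$). *)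

theory Defs
  imports Main "HOL-Library.Extended_Nat"
begin

text \<open>Since the corner ring pAp is not a type, all notions are
relativised to a subring given by a carrier set S with its own unit e.
For the whole ring A take S = UNIV and e = 1.
Rows of length n are functions a :: nat => 'a restricted to indices i < n.\<close>

definition full_idempotent :: "'a::ring_1 \<Rightarrow> bool" where
  "full_idempotent p \<longleftrightarrow> p * p = p \<and>
     (\<forall>x. \<exists>(k::nat) u v. x = (\<Sum>i<k. u i * p * v i))"

definition right_unimodular_on :: "'a::ring_1 set \<Rightarrow> 'a \<Rightarrow> nat \<Rightarrow> (nat \<Rightarrow> 'a) \<Rightarrow> bool" where
  "right_unimodular_on S e n a \<longleftrightarrow>
     (\<exists>x. (\<forall>i<n. x i \<in> S) \<and> (\<Sum>i<n. a i * x i) = e)"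

definition reducible_on :: "'a::ring_1 set \<Rightarrow> 'a \<Rightarrow> nat \<Rightarrow> (nat \<Rightarrow> 'a) \<Rightarrow> 'a \<Rightarrow> bool" where
  "reducible_on S e n a b \<longleftrightarrow>
     (\<exists>c. (\<forall>i<n. c i \<in> S) \<and> right_unimodular_on S e n (\<lambda>i. a i + b * c i))"

definition sr_le :: "'a::ring_1 set \<Rightarrow> 'a \<Rightarrow> nat \<Rightarrow> bool" where
  "sr_le S e n \<longleftrightarrow>
     (\<forall>a b. (\<forall>i<n. a i \<in> S) \<and> b \<in> S \<and> right_unimodular_on S e (Suc n) (a(n := b))
        \<longrightarrow> reducible_on S e n a b)"

definition stable_rank_on :: "'a::ring_1 set \<Rightarrow> 'a \<Rightarrow> enat" where
  "stable_rank_on S e =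
     (if \<exists>n>0. sr_le S e n then enat (LEAST n. n > 0 \<and> sr_le S e n) else \<infinity>)"

definition stable_rank :: "'a::ring_1 itself \<Rightarrow> enat" where
  "stable_rank _ = stable_rank_on (UNIV :: 'a set) 1"

definition corner :: "'a::ring_1 \<Rightarrow> 'a set" where
  "corner p = {p * x * p | x. True}"

end

theory Submission
  imports Defs
begin

text \<open>Write \<open>f = 1 - p\<close> and let \<open>(x\<^sub>0, ..., x\<^bsub>n(m-1)\<^esub>, y)\<close> be a unimodular row of
\<open>pAp\<close>, say \<open>\<Sum> x\<^sub>i r\<^sub>i + y s = p\<close>. Group the first \<open>n(m-1)\<close> entries into \<open>m-1\<close> blocks of
length \<open>n\<close>. Using \<open>\<Sum> a\<^sub>j p b\<^sub>j = 1\<close>, block \<open>k\<close> is compressed into the single entry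
\<open>u\<^sub>k = \<Sum>\<^sub>j x\<^bsub>kn+j\<^esub> b\<^sub>j\<close> of \<open>A\<close> with coefficient \<open>t\<^sub>k = \<Sum>\<^sub>j a\<^sub>j r\<^bsub>kn+j\<^esub>\<close>, the last entry
becomes \<open>x\<^bsub>n(m-1)\<^esub> + f\<close> with coefficient \<open>r\<^bsub>n(m-1)\<^esub> + f\<close>, and what the compression
misses, \<open>v = y s + \<Sum> x\<^bsub>kn+j\<^esub> q\<^bsub>kj\<^esub>\<close> with \<open>q\<^bsub>kj\<^esub> = r\<^bsub>kn+j\<^esub> - p b\<^sub>j t\<^sub>k\<close>, is appended.
The resulting row \<open>(u, v)\<close> of length \<open>m + 1\<close> is unimodular over \<open>A\<close>
(\<open>lift_row\<close>, \<open>lift_coeff\<close>, \<open>lift_defect\<close>, \<open>lift_last\<close> below). A reduction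
\<open>\<Sum> (u\<^sub>k + v c\<^sub>k) z\<^sub>k = 1\<close>, which exists as \<open>sr(A) \<le> m\<close>, is expanded back through the
\<open>a\<^sub>j\<close> into a reduction of the original row inside \<open>pAp\<close> (\<open>descent_shift\<close>,
\<open>descent_coeff\<close>); the expansion is exact because \<open>\<Sum>\<^sub>j a\<^sub>j p q\<^bsub>kj\<^esub> = 0\<close>.\<close>

lemma mem_corner_iff:
  fixes p :: "'a::ring_1"
  assumes "p * p = p"
  shows "z \<in> corner p \<longleftrightarrow> p * z = z \<and> z * p = z"
proof
  assume "z \<in> corner p"
  then obtain w where "z = p * w * p" by (auto simp: corner_def)
  then show "p * z = z \<and> z * p = z" by (metis assms mult.assoc)
next
  assume "p * z = z \<and> z * p = z"
  then have "z = p * z * p" by simp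
  then show "z \<in> corner p" by (auto simp: corner_def)
qed

lemma sum_lessThan_mult_blocks:
  fixes n M :: nat
  shows "(\<Sum>i<n * M. g i :: 'a::comm_monoid_add) = (\<Sum>k<M. \<Sum>j<n. g (k * n + j))"
proof -
  have "sum g {k * n..<k * n + n} = (\<Sum>j<n. g (k * n + j))" for k
    using sum.shift_bounds_nat_ivl[of g 0 "k * n" n] by (simp add: atLeast0LessThan ac_simps)
  then show ?thesis by (simp flip: sum.nat_group add: mult.commute)
qed

lemma block_index_less:
  fixes k j n M :: nat
  assumes "k < M" "j < n"
  shows "k * n + j < n * M"
proof -
  have "Suc k * n \<le> M * n" using assms(1) by (intro mult_le_mono1) simp
  then show ?thesis using assms(2) by (simp add: mult.commute)
qed

lemma block_index_div_mod:
  fixes i n M :: nat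
  assumes "i < n * M"
  shows "i div n < M" "i mod n < n"
proof -
  have "0 < n" using assms by (cases n) auto
  then show "i div n < M" "i mod n < n"
    using assms by (simp_all add: div_less_iff_less_mult mult.commute)
qed

lemma stable_rank_eq_enatD:
  assumes "stable_rank TYPE('a::ring_1) = enat m"
  shows "0 < m" and "sr_le (UNIV::'a set) 1 m"
proof -
  have ex: "\<exists>n>0. sr_le (UNIV::'a set) 1 n"
    using assms unfolding stable_rank_def stable_rank_on_def by (auto split: if_splits)
  then have "m = (LEAST n. n > 0 \<and> sr_le (UNIV::'a set) 1 n)"
    using assms unfolding stable_rank_def stable_rank_on_def by auto
  then show "0 < m" and "sr_le (UNIV::'a set) 1 m"
    using LeastI_ex[OF ex] by simp_all
qed

lemma stable_rank_on_le_enat: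
  assumes "0 < N" "sr_le S e N"
  shows "stable_rank_on S e \<le> enat N"
proof -
  have "(LEAST n. n > 0 \<and> sr_le S e n) \<le> N" using assms by (intro Least_le) simp
  then show ?thesis using assms unfolding stable_rank_on_def by auto
qed

locale corner_presentation =
  fixes p :: "'a::ring_1" and n :: nat and a b :: "nat \<Rightarrow> 'a"
  assumes idem: "p * p = p"
    and unit_decomp: "(\<Sum>j<n. a j * p * b j) = 1"
begin

lemmas corner_iff = mem_corner_iff[OF idem]

declare idem [simp]

lemma idem_assoc [simp]: "p * (p * z) = p * z" "z * p * p = z * p"
  by (metis idem mult.assoc)+

lemma complement_orthogonal [simp]:
  "(1 - p) * p = 0" "p * (1 - p) = 0" "(1 - p) * (1 - p) = 1 - p"
  by (simp_all add: algebra_simps idem)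

end

locale unimodular_corner_row = corner_presentation +
  fixes M :: nat and x r :: "nat \<Rightarrow> 'a::ring_1" and y s :: 'a
  assumes x_corner: "i \<le> n * M \<Longrightarrow> x i \<in> corner p"
    and r_corner: "i \<le> n * M \<Longrightarrow> r i \<in> corner p"
    and y_corner: "y \<in> corner p" and s_corner: "s \<in> corner p"
    and row_sum: "(\<Sum>i<n * M. x i * r i) + x (n * M) * r (n * M) + y * s = p"
begin

lemma x_absorbs_p:
  assumes "i \<le> n * M"
  shows "p * x i = x i" "x i * p = x i" "x i * (p * z) = x i * z" "x i * (1 - p) = 0"
  using x_corner[OF assms] by (auto simp: corner_iff right_diff_distrib simp flip: mult.assoc)

lemma x_block_absorbs_p:
  assumes "k < M" "j < n"
  shows "p * x (k * n + j) = x (k * n + j)" "x (k * n + j) * p = x (k * n + j)"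
    "x (k * n + j) * (p * z) = x (k * n + j) * z"
  using x_absorbs_p block_index_less[OF assms] by simp_all

lemma r_absorbs_p:
  assumes "i \<le> n * M"
  shows "p * r i = r i" "(1 - p) * r i = 0"
  using r_corner[OF assms] by (auto simp: corner_iff left_diff_distrib)

definition lift_row :: "nat \<Rightarrow> 'a" where
  "lift_row k = (if k < M then (\<Sum>j<n. x (k * n + j) * b j) else x (n * M) + (1 - p))"

definition lift_coeff :: "nat \<Rightarrow> 'a" where
  "lift_coeff k = (if k < M then (\<Sum>j<n. a j * r (k * n + j)) else r (n * M) + (1 - p))"

definition lift_defect :: "nat \<Rightarrow> nat \<Rightarrow> 'a" where
  "lift_defect k j = r (k * n + j) - p * b j * lift_coeff k"

definition lift_last :: 'a where
  "lift_last = y * s + (\<Sum>k<M. \<Sum>j<n. x (k * n + j) * lift_defect k j)"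

lemma lift_block_identity:
  assumes "k < M"
  shows "lift_row k * lift_coeff k + (\<Sum>j<n. x (k * n + j) * lift_defect k j)
    = (\<Sum>j<n. x (k * n + j) * r (k * n + j))"
proof -
  have "x (k * n + j) * b j * lift_coeff k + x (k * n + j) * lift_defect k j
      = x (k * n + j) * r (k * n + j)" if "j < n" for j
    using x_block_absorbs_p(3)[OF assms that]
    by (simp add: lift_defect_def right_diff_distrib mult.assoc)
  then show ?thesis
    using assms by (simp add: lift_row_def sum_distrib_right flip: sum.distrib)
qed

lemma lift_last_identity: "lift_row M * lift_coeff M = x (n * M) * r (n * M) + (1 - p)"
  using x_absorbs_p(4) r_absorbs_p(2) by (simp add: lift_row_def lift_coeff_def algebra_simps)

lemma lift_row_sum: "(\<Sum>k<Suc M. lift_row k * lift_coeff k) + lift_last = 1"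
proof -
  have "(\<Sum>k<M. lift_row k * lift_coeff k) + (\<Sum>k<M. \<Sum>j<n. x (k * n + j) * lift_defect k j)
      = (\<Sum>i<n * M. x i * r i)"
    by (simp add: lift_block_identity sum_lessThan_mult_blocks flip: sum.distrib)
  then have "(\<Sum>k<Suc M. lift_row k * lift_coeff k) + lift_last
      = ((\<Sum>i<n * M. x i * r i) + x (n * M) * r (n * M) + y * s) + (1 - p)"
    by (simp add: lift_last_def lift_last_identity algebra_simps)
  then show ?thesis by (simp add: row_sum)
qed

lemma lift_row_unimodular:
  "right_unimodular_on UNIV 1 (Suc (Suc M)) (lift_row(Suc M := lift_last))"
proof -
  have "(\<Sum>k<Suc M. (lift_row(Suc M := lift_last)) k * (lift_coeff(Suc M := 1)) k)
      = (\<Sum>k<Suc M. lift_row k * lift_coeff k)"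
    by (rule sum.cong) auto
  then show ?thesis
    unfolding right_unimodular_on_def using lift_row_sum
    by (intro exI[of _ "lift_coeff(Suc M := 1)"]) simp
qed

lemma p_mult_lift_row:
  "k < M \<Longrightarrow> p * lift_row k = lift_row k"
  "p * lift_row M = x (n * M)"
  "k < M \<Longrightarrow> (1 - p) * lift_row k = 0"
  "(1 - p) * lift_row M = 1 - p"
  using x_block_absorbs_p x_absorbs_p
  by (simp_all add: lift_row_def sum_distrib_left distrib_left left_diff_distrib flip: mult.assoc)

lemma p_mult_lift_last: "p * lift_last = lift_last" "(1 - p) * lift_last = 0"
proof -
  have "p * (y * s) = y * s" using y_corner by (simp add: corner_iff flip: mult.assoc)
  then show "p * lift_last = lift_last"
    using x_block_absorbs_p by (simp add: lift_last_def distrib_left sum_distrib_left flip: mult.assoc)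
  then show "(1 - p) * lift_last = 0" by (simp add: left_diff_distrib)
qed

lemma p_mult_lift_defect:
  assumes "k < M" "j < n"
  shows "p * lift_defect k j = lift_defect k j"
  using r_absorbs_p(1) block_index_less[OF assms]
  by (simp add: lift_defect_def right_diff_distrib flip: mult.assoc)

lemma a_p_lift_defect_sum:
  assumes "k < M"
  shows "(\<Sum>j<n. a j * p * lift_defect k j) = 0"
proof -
  have "a j * p * lift_defect k j = a j * r (k * n + j) - a j * p * b j * lift_coeff k"
    if "j < n" for j
    using r_absorbs_p(1) block_index_less[OF assms that]
    by (simp add: lift_defect_def right_diff_distrib mult.assoc)
  then have "(\<Sum>j<n. a j * p * lift_defect k j)
      = (\<Sum>j<n. a j * r (k * n + j)) - (\<Sum>j<n. a j * p * b j) * lift_coeff k"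
    by (simp add: sum_subtractf sum_distrib_right)
  then show ?thesis using assms by (simp add: unit_decomp lift_coeff_def)
qed

definition descent_weight :: "(nat \<Rightarrow> 'a) \<Rightarrow> (nat \<Rightarrow> 'a) \<Rightarrow> 'a" where
  "descent_weight c z = (\<Sum>k<Suc M. c k * z k)"

definition descent_shift :: "(nat \<Rightarrow> 'a) \<Rightarrow> nat \<Rightarrow> 'a" where
  "descent_shift c i = (if i < n * M then s * c (i div n) * a (i mod n) * p else s * c M * p)"

definition descent_coeff :: "(nat \<Rightarrow> 'a) \<Rightarrow> (nat \<Rightarrow> 'a) \<Rightarrow> nat \<Rightarrow> 'a" where
  "descent_coeff c z i =
    (if i < n * M
     then p * b (i mod n) * z (i div n) + lift_defect (i div n) (i mod n) * descent_weight c z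
     else p * z M)"

lemma descent_shift_corner: "descent_shift c i \<in> corner p"
proof -
  have "p * s = s" using s_corner by (simp add: corner_iff)
  then show ?thesis by (simp add: corner_iff descent_shift_def mult.assoc flip: mult.assoc[of p])
qed

lemma descent_coeff_corner:
  assumes z_p: "\<And>k. z k * p = z k"
  shows "descent_coeff c z i \<in> corner p"
proof -
  have "descent_weight c z * p = descent_weight c z"
    unfolding descent_weight_def sum_distrib_right by (simp add: mult.assoc z_p)
  then have right: "descent_coeff c z i * p = descent_coeff c z i"
    by (simp add: descent_coeff_def distrib_right mult.assoc z_p)
  have "p * descent_coeff c z i = descent_coeff c z i"
  proof (cases "i < n * M")
    case True
    then show ?thesis
      using block_index_div_mod[OF True] p_mult_lift_defect
      by (simp add: descent_coeff_def distrib_left flip: mult.assoc)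
  qed (simp add: descent_coeff_def)
  with right show ?thesis by (simp add: corner_iff)
qed

lemma block_descent_sum:
  assumes "k < M"
  shows "(\<Sum>j<n. (x (k * n + j) + y * (s * e * a j * p)) * (p * b j * w + lift_defect k j * W))
    = lift_row k * w + (\<Sum>j<n. x (k * n + j) * lift_defect k j) * W + y * s * e * w"
proof -
  have "(x (k * n + j) + y * (s * e * a j * p)) * (p * b j * w + lift_defect k j * W)
      = x (k * n + j) * b j * w + x (k * n + j) * lift_defect k j * W
        + y * s * e * (a j * p * b j) * w + y * s * e * (a j * p * lift_defect k j) * W"
    if "j < n" for j
    using x_block_absorbs_p(3)[OF assms that] by (simp add: algebra_simps)
  then have "(\<Sum>j<n. (x (k * n + j) + y * (s * e * a j * p)) * (p * b j * w + lift_defect k j * W))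
      = (\<Sum>j<n. x (k * n + j) * b j) * w + (\<Sum>j<n. x (k * n + j) * lift_defect k j) * W
        + y * s * e * (\<Sum>j<n. a j * p * b j) * w + y * s * e * (\<Sum>j<n. a j * p * lift_defect k j) * W"
    by (simp add: sum.distrib sum_distrib_left sum_distrib_right)
  then show ?thesis
    using assms by (simp add: a_p_lift_defect_sum unit_decomp lift_row_def)
qed

lemma reduction_last_absorbs_p:
  assumes red: "(\<Sum>k<Suc M. (lift_row k + lift_last * c k) * z k) = p"
  shows "p * z M = z M"
proof -
  have block_terms: "(\<Sum>k<M. (1 - p) * (lift_row k + lift_last * c k) * z k) = 0"
    using p_mult_lift_row(3) p_mult_lift_last(2)
    by (intro sum.neutral) (simp add: distrib_left flip: mult.assoc)
  have "0 = (1 - p) * (\<Sum>k<Suc M. (lift_row k + lift_last * c k) * z k)"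
    using red by simp
  also have "\<dots> = (1 - p) * z M"
    using block_terms p_mult_lift_row(4) p_mult_lift_last(2)
    by (simp add: sum_distrib_left distrib_left flip: mult.assoc)
  finally show ?thesis by (simp add: left_diff_distrib)
qed

lemma descent_sum:
  assumes red: "(\<Sum>k<Suc M. (lift_row k + lift_last * c k) * z k) = p"
  shows "(\<Sum>i<Suc (n * M). (x i + y * descent_shift c i) * descent_coeff c z i) = p"
proof -
  define W where "W = descent_weight c z"
  define G where "G = (\<Sum>k<M. \<Sum>j<n. x (k * n + j) * lift_defect k j)"
  have "(\<Sum>i<n * M. (x i + y * descent_shift c i) * descent_coeff c z i)
      = (\<Sum>k<M. \<Sum>j<n. (x (k * n + j) + y * (s * c k * a j * p)) * (p * b j * z k + lift_defect k j * W))"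
    unfolding sum_lessThan_mult_blocks using block_index_less
    by (intro sum.cong refl) (simp add: descent_shift_def descent_coeff_def W_def)
  also have "\<dots> = (\<Sum>k<M. lift_row k * z k) + G * W + (\<Sum>k<M. y * s * c k * z k)"
    by (simp add: block_descent_sum G_def sum.distrib sum_distrib_right)
  finally have blocks: "(\<Sum>i<n * M. (x i + y * descent_shift c i) * descent_coeff c z i)
      = (\<Sum>k<M. lift_row k * z k) + G * W + (\<Sum>k<M. y * s * c k * z k)" .
  have last: "(x (n * M) + y * descent_shift c (n * M)) * descent_coeff c z (n * M)
      = x (n * M) * z M + y * s * c M * z M"
    using x_absorbs_p(3) reduction_last_absorbs_p[OF red]
    by (simp add: descent_shift_def descent_coeff_def algebra_simps)
  have "p = p * (\<Sum>k<Suc M. (lift_row k + lift_last * c k) * z k)"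
    using red by simp
  also have "\<dots> = (\<Sum>k<M. lift_row k * z k) + x (n * M) * z M + lift_last * W"
    using p_mult_lift_row(1,2) p_mult_lift_last(1)
    by (simp add: W_def descent_weight_def sum_distrib_left sum.distrib algebra_simps
        flip: mult.assoc)
  finally have expanded: "p = (\<Sum>k<M. lift_row k * z k) + x (n * M) * z M + lift_last * W" .
  have "y * s * W = (\<Sum>k<Suc M. y * s * c k * z k)"
    unfolding W_def descent_weight_def sum_distrib_left by (simp add: mult.assoc)
  then have "lift_last * W = G * W + (\<Sum>k<Suc M. y * s * c k * z k)"
    by (simp add: lift_last_def G_def distrib_right add.commute)
  then show ?thesis using expanded blocks last by (simp add: algebra_simps)
qed

lemma reducible_if_lift_reducible:
  assumes "reducible_on UNIV 1 (Suc M) lift_row lift_last"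
  shows "reducible_on (corner p) p (Suc (n * M)) x y"
proof -
  obtain c z where lift_red: "(\<Sum>k<Suc M. (lift_row k + lift_last * c k) * z k) = 1"
    using assms unfolding reducible_on_def right_unimodular_on_def by blast
  have "(\<Sum>k<Suc M. (lift_row k + lift_last * c k) * (z k * p))
      = (\<Sum>k<Suc M. (lift_row k + lift_last * c k) * z k) * p"
    unfolding sum_distrib_right by (simp only: mult.assoc)
  with lift_red have red: "(\<Sum>k<Suc M. (lift_row k + lift_last * c k) * (z k * p)) = p"
    by simp
  have "descent_coeff c (\<lambda>k. z k * p) i \<in> corner p" for i
    by (intro descent_coeff_corner) (simp add: mult.assoc)
  then show ?thesis
    unfolding reducible_on_def right_unimodular_on_def
    using descent_shift_corner descent_sum[OF red] by blast
qed

end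

context corner_presentation
begin

lemma sr_le_corner:
  assumes "sr_le (UNIV::'a set) 1 (Suc M)"
  shows "sr_le (corner p) p (Suc (n * M))"
  unfolding sr_le_def
proof (intro allI impI)
  fix x :: "nat \<Rightarrow> 'a" and y
  assume row: "(\<forall>i<Suc (n * M). x i \<in> corner p) \<and> y \<in> corner p \<and>
    right_unimodular_on (corner p) p (Suc (Suc (n * M))) (x(Suc (n * M) := y))"
  then obtain r where r: "\<forall>i<Suc (Suc (n * M)). r i \<in> corner p"
    and row_sum: "(\<Sum>i<Suc (Suc (n * M)). (x(Suc (n * M) := y)) i * r i) = p"
    unfolding right_unimodular_on_def by blast
  have "(\<Sum>i<Suc (n * M). (x(Suc (n * M) := y)) i * r i) = (\<Sum>i<Suc (n * M). x i * r i)"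
    by (rule sum.cong) auto
  with row_sum have "(\<Sum>i<n * M. x i * r i) + x (n * M) * r (n * M) + y * r (Suc (n * M)) = p"
    by simp
  then interpret unimodular_corner_row p n a b M x r y "r (Suc (n * M))"
    using row r by unfold_locales auto
  show "reducible_on (corner p) p (Suc (n * M)) x y"
    using assms lift_row_unimodular reducible_if_lift_reducible unfolding sr_le_def by blast
qed

lemma stable_rank_on_corner_le:
  assumes "sr_le (UNIV::'a set) 1 m" and "0 < m"
  shows "stable_rank_on (corner p) p \<le> enat (n * (m - 1) + 1)"
proof -
  obtain M where m: "m = Suc M" using assms(2) gr0_implies_Suc by blast
  then have "sr_le (corner p) p (Suc (n * M))" using sr_le_corner assms(1) by simp
  then show ?thesis using m stable_rank_on_le_enat[of "Suc (n * M)"] by simp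
qed

end

theorem theorem8:
  fixes p :: "'a::ring_1" and n :: nat and a b :: "nat \<Rightarrow> 'a"
  assumes "full_idempotent p"
    and "(\<Sum>i<n. a i * p * b i) = 1"
  shows "\<forall>m. stable_rank TYPE('a) = enat m \<longrightarrow>
           stable_rank_on (corner p) p \<le> enat (n * m - n + 1)"
proof (intro allI impI)
  fix m assume "stable_rank TYPE('a) = enat m"
  note sr_A = stable_rank_eq_enatD[OF this]
  \<comment> \<open>Fullness is only used through \<open>p * p = p\<close>:
    the second hypothesis already gives \<open>1 \<in> ApA\<close>.\<close>
  have "p * p = p" using assms(1) by (simp add: full_idempotent_def)
  then interpret corner_presentation p n a b using assms(2) by unfold_locales
  have "n * m - n + 1 = n * (m - 1) + 1" by (simp add: diff_mult_distrib2)
  then show "stable_rank_on (corner p) p \<le> enat (n * m - n + 1)"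
    using stable_rank_on_corner_le[OF sr_A(2,1)] by simp
qed

end
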